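(* Let $K$ be a field of characteristic $p>3$ and $n\ge1$. For every linear form $f\in O_1(n)^*$, the bilinear form $(a\partial,b\partial)\mapsto f(ab)$ ($a,b\in O_1(n)$) is a commutative $2$-cocycle on the Zassenhaus algebra $W_1(n)$, every commutative $2$-cocycle on $W_1(n)$ is of this form, and the map $f\mapsto[(a\partial,b\partial)\mapsto f(ab)]$ is an isomorphism $O_1(n)^*\cong Z^2_{comm}(W_1(n))$.
   Context: $O_1(n)$ is the divided power algebra with basis $x^{(i)}$, $0\le i\le p^n-1$, and multiplication $x^{(i)}x^{(j)}=\binom{i+j}{j}x^{(i+j)}$ (interpreted as $0$ if $i+j>p^n-1$); $\partial$ is its derivation $\partial(x^{(i)})=x^{(i-1)}$, $\partial(x^{(0)})=0$. The Zassenhaus algebra $W_1(n)=\{a\partial: a\in O_1(n)\}$ has bracket $[a\partial,b\partial]=(a\partial(b)-b\partial(a))\partial$. $Z^2_{comm}(L)$ is the space of symmetric bilinear forms $\varphi:L\times L\to K$ with $\varphi([x,y],z)+\varphi([z,x],y)+\varphi([y,z],x)=0$ for all $x,y,z\in L$. *)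

theory Defs
  imports Main
begin

text \<open>Elements of the divided power algebra O_1(n) over K (with p = char K) are
represented by their coefficient sequences a :: nat \<Rightarrow> 'k w.r.t. the basis
x^(i), 0 \<le> i \<le> p^n - 1, vanishing for i \<ge> p^n.  The Zassenhaus algebra
W_1(n) = O_1(n) \<partial> is identified with O_1(n) via a\<partial> \<leftrightarrow> a.\<close>

definition O1 :: "nat \<Rightarrow> nat \<Rightarrow> (nat \<Rightarrow> 'k::field) set" where
  "O1 p n = {a. \<forall>i\<ge>p^n. a i = 0}"

text \<open>x^(i) x^(j) = binom(i+j, j) x^(i+j), zero if i+j > p^n - 1.\<close>
definition O1_mult :: "nat \<Rightarrow> nat \<Rightarrow> (nat \<Rightarrow> 'k::field) \<Rightarrow> (nat \<Rightarrow> 'k) \<Rightarrow> (nat \<Rightarrow> 'k)" where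
  "O1_mult p n a b = (\<lambda>k. if k < p^n
      then (\<Sum>i\<le>k. of_nat ((k choose i)) * a i * b (k - i)) else 0)"

text \<open>\<partial>(x^(i)) = x^(i-1), \<partial>(x^(0)) = 0.\<close>
definition O1_der :: "nat \<Rightarrow> nat \<Rightarrow> (nat \<Rightarrow> 'k::field) \<Rightarrow> (nat \<Rightarrow> 'k)" where
  "O1_der p n a = (\<lambda>i. if i + 1 < p^n then a (i + 1) else 0)"

definition W1_bracket :: "nat \<Rightarrow> nat \<Rightarrow> (nat \<Rightarrow> 'k::field) \<Rightarrow> (nat \<Rightarrow> 'k) \<Rightarrow> (nat \<Rightarrow> 'k)" where
  "W1_bracket p n a b = (\<lambda>i. O1_mult p n a (O1_der p n b) i - O1_mult p n b (O1_der p n a) i)"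

definition lin_forms :: "(nat \<Rightarrow> 'k::field) set \<Rightarrow> ((nat \<Rightarrow> 'k) \<Rightarrow> 'k) set" where
  "lin_forms V = {f. (\<forall>a\<in>V. \<forall>b\<in>V. f (\<lambda>i. a i + b i) = f a + f b)
                   \<and> (\<forall>c. \<forall>a\<in>V. f (\<lambda>i. c * a i) = c * f a)
                   \<and> (\<forall>a. a \<notin> V \<longrightarrow> f a = 0)}"

definition bil_forms :: "(nat \<Rightarrow> 'k::field) set \<Rightarrow> ((nat \<Rightarrow> 'k) \<Rightarrow> (nat \<Rightarrow> 'k) \<Rightarrow> 'k) set" where
  "bil_forms V = {\<phi>. (\<forall>a\<in>V. \<phi> a \<in> lin_forms V) \<and> (\<forall>b\<in>V. (\<lambda>a. \<phi> a b) \<in> lin_forms V)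
                   \<and> (\<forall>a b. a \<notin> V \<or> b \<notin> V \<longrightarrow> \<phi> a b = 0)}"

definition Z2comm_W1 :: "nat \<Rightarrow> nat \<Rightarrow> ((nat \<Rightarrow> 'k::field) \<Rightarrow> (nat \<Rightarrow> 'k) \<Rightarrow> 'k) set" where
  "Z2comm_W1 p n = {\<phi>. \<phi> \<in> bil_forms (O1 p n)
      \<and> (\<forall>x\<in>O1 p n. \<forall>y\<in>O1 p n. \<phi> x y = \<phi> y x)
      \<and> (\<forall>x\<in>O1 p n. \<forall>y\<in>O1 p n. \<forall>z\<in>O1 p n.
           \<phi> (W1_bracket p n x y) z + \<phi> (W1_bracket p n z x) y + \<phi> (W1_bracket p n y z) x = 0)}"

definition cocycle_of :: "nat \<Rightarrow> nat \<Rightarrow> ((nat \<Rightarrow> 'k::field) \<Rightarrow> 'k) \<Rightarrow> ((nat \<Rightarrow> 'k) \<Rightarrow> (nat \<Rightarrow> 'k) \<Rightarrow> 'k)" where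
  "cocycle_of p n f = (\<lambda>a b. if a \<in> O1 p n \<and> b \<in> O1 p n then f (O1_mult p n a b) else 0)"

end

theory Submission
  imports Defs
begin

(*
  That f(ab) is a commutative cocycle only uses that O_1(n) is commutative and associative,
  and f is recovered from its cocycle as f = f(1 * -).

  Conversely, subtracting from a cocycle phi the cocycle of f = phi(1, -) leaves a cocycle psi
  with psi(1, -) = 0, and it remains to show psi(x^(i), x^(j)) = 0.  Write N = p^n.  The cocycle
  identity for (x^(i), x^(j), 1) shows that psi(x^(i), x^(j)) only depends on i + j, so it
  vanishes for i + j < N.  Since [x^(1), x^(j)] = (j - 1) x^(j), the identity for
  (x^(1), x^(j), x^(k)) with j + k > N gives (j - k) psi(x^(j), x^(k)) = 0, and two pairs on
  the same antidiagonal whose differences j - k differ by 2 kill it.  The antidiagonals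
  i + j = N and i + j = 2N - 2 are handled by the triples (x^(1), x^(2), x^(N-2)) and
  (x^(2), x^(N-2), x^(N-1)), using [x^(2), x^(N-2)] = 2 x^(N-1) in characteristic p and
  2, 3 <> 0.
*)

lemma sum_triangle_swap:
  fixes F :: "nat \<Rightarrow> nat \<Rightarrow> 'a::comm_monoid_add"
  shows "(\<Sum>i\<le>k. \<Sum>j\<le>i. F i j) = (\<Sum>j\<le>k. \<Sum>m\<le>k - j. F (j + m) j)"
proof (induction k)
  case (Suc k)
  have "(\<Sum>j\<le>Suc k. \<Sum>m\<le>Suc k - j. F (j + m) j)
      = (\<Sum>j\<le>k. (\<Sum>m\<le>k - j. F (j + m) j) + F (Suc k) j) + F (Suc k) (Suc k)"
    by (auto simp: Suc_diff_le intro!: sum.cong)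
  then show ?case
    using Suc by (simp add: sum.distrib add.assoc)
qed simp

lemma O1_mult_commute: "O1_mult p n a b = O1_mult p n b a"
proof
  fix k
  have "(\<Sum>i\<le>k. of_nat (k choose i) * a i * b (k - i))
      = (\<Sum>i\<le>k. of_nat (k choose (k - i)) * a (k - i) * b i)"
    by (rule sum.reindex_bij_witness[where i = "\<lambda>i. k - i" and j = "\<lambda>i. k - i"]) auto
  also have "\<dots> = (\<Sum>i\<le>k. of_nat (k choose i) * b i * a (k - i))"
    by (intro sum.cong) (auto simp: binomial_symmetric[symmetric] mult_ac)
  finally show "O1_mult p n a b k = O1_mult p n b a k"
    by (simp add: O1_mult_def)
qed

lemma O1_mult_assoc: "O1_mult p n (O1_mult p n a b) c = O1_mult p n a (O1_mult p n b c)"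
proof
  fix k
  show "O1_mult p n (O1_mult p n a b) c k = O1_mult p n a (O1_mult p n b c) k"
  proof (cases "k < p^n")
    case True
    have lhs: "O1_mult p n (O1_mult p n a b) c k =
      (\<Sum>i\<le>k. \<Sum>j\<le>i. of_nat (k choose i) * of_nat (i choose j) * a j * b (i - j) * c (k - i))"
      using True by (auto simp: O1_mult_def sum_distrib_left sum_distrib_right mult_ac intro!: sum.cong)
    have rhs: "O1_mult p n a (O1_mult p n b c) k =
      (\<Sum>j\<le>k. \<Sum>m\<le>k - j. of_nat (k choose j) * of_nat ((k - j) choose m) * a j * b m * c (k - j - m))"
      using True by (auto simp: O1_mult_def sum_distrib_left sum_distrib_right mult_ac intro!: sum.cong)
    show ?thesis
      unfolding lhs rhs sum_triangle_swap
    proof (intro sum.cong refl)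
      fix j m assume "j \<in> {..k}" "m \<in> {..k - j}"
      then have "(k choose (j + m)) * ((j + m) choose j) = (k choose j) * ((k - j) choose m)"
        using choose_mult[of j "j + m" k] by auto
      then have "(of_nat (k choose (j + m)) :: 'a) * of_nat ((j + m) choose j)
               = of_nat (k choose j) * of_nat ((k - j) choose m)"
        by (metis of_nat_mult)
      then show "of_nat (k choose (j + m)) * of_nat ((j + m) choose j) * a j * b (j + m - j) * c (k - (j + m))
               = of_nat (k choose j) * of_nat ((k - j) choose m) * a j * b m * c (k - j - m)"
        by (simp add: diff_diff_add)
    qed
  qed (simp add: O1_mult_def)
qed

lemma O1_mult_in_O1 [simp]: "O1_mult p n a b \<in> O1 p n"
  by (simp add: O1_def O1_mult_def)

lemma W1_bracket_in_O1 [simp]: "W1_bracket p n a b \<in> O1 p n"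
  by (simp add: O1_def W1_bracket_def O1_mult_def)

lemma O1_zero [simp]: "(\<lambda>i. 0) \<in> O1 p n"
  by (simp add: O1_def)

lemma O1_add [simp]: "a \<in> O1 p n \<Longrightarrow> b \<in> O1 p n \<Longrightarrow> (\<lambda>i. a i + b i) \<in> O1 p n"
  by (simp add: O1_def)

lemma O1_smult [simp]: "a \<in> O1 p n \<Longrightarrow> (\<lambda>i. c * a i) \<in> O1 p n"
  by (simp add: O1_def)

lemma O1_smult_iff: "c \<noteq> 0 \<Longrightarrow> (\<lambda>i. c * a i) \<in> O1 p n \<longleftrightarrow> a \<in> O1 p n"
  by (simp add: O1_def)

lemma O1_mult_add_left: "O1_mult p n (\<lambda>i. a i + b i) c = (\<lambda>k. O1_mult p n a c k + O1_mult p n b c k)"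
  by (auto simp: O1_mult_def algebra_simps sum.distrib)

lemma O1_mult_diff_left: "O1_mult p n (\<lambda>i. a i - b i) c = (\<lambda>k. O1_mult p n a c k - O1_mult p n b c k)"
  by (auto simp: O1_mult_def algebra_simps sum_subtractf)

lemma O1_mult_smult_left: "O1_mult p n (\<lambda>i. d * a i) c = (\<lambda>k. d * O1_mult p n a c k)"
  by (auto simp: O1_mult_def algebra_simps sum_distrib_left)

lemma O1_mult_add_right: "O1_mult p n c (\<lambda>i. a i + b i) = (\<lambda>k. O1_mult p n c a k + O1_mult p n c b k)"
  by (metis O1_mult_add_left O1_mult_commute)

lemma O1_mult_smult_right: "O1_mult p n c (\<lambda>i. d * a i) = (\<lambda>k. d * O1_mult p n c a k)"
  by (metis O1_mult_smult_left O1_mult_commute)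

lemma O1_mult_W1_bracket_cyclic:
  "O1_mult p n (W1_bracket p n x y) z k + O1_mult p n (W1_bracket p n z x) y k
     + O1_mult p n (W1_bracket p n y z) x k = 0"
proof -
  \<comment> \<open>Each product \<open>\<partial>(u) v w\<close> occurs twice in the cyclic sum, with opposite signs.\<close>
  have regroup: "O1_mult p n (O1_mult p n a (O1_der p n b)) c
               = O1_mult p n (O1_der p n b) (O1_mult p n a c)" for a b c
    by (metis O1_mult_assoc O1_mult_commute)
  show ?thesis
    unfolding W1_bracket_def O1_mult_diff_left regroup
    unfolding O1_mult_commute[of p n z x] O1_mult_commute[of p n y x] O1_mult_commute[of p n z y]
    by simp
qed

lemma
  assumes "f \<in> lin_forms V"
  shows lin_forms_add: "a \<in> V \<Longrightarrow> b \<in> V \<Longrightarrow> f (\<lambda>i. a i + b i) = f a + f b"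
    and lin_forms_smult: "a \<in> V \<Longrightarrow> f (\<lambda>i. c * a i) = c * f a"
    and lin_forms_outside: "a \<notin> V \<Longrightarrow> f a = 0"
  using assms unfolding lin_forms_def by blast+

lemma lin_forms_zero:
  assumes "f \<in> lin_forms V" "a \<in> V"
  shows "f (\<lambda>i. 0) = 0"
  using lin_forms_smult[OF assms, of 0] by simp

lemma
  assumes "\<phi> \<in> bil_forms V"
  shows bil_forms_lin_left: "a \<in> V \<Longrightarrow> \<phi> a \<in> lin_forms V"
    and bil_forms_lin_right: "b \<in> V \<Longrightarrow> (\<lambda>a. \<phi> a b) \<in> lin_forms V"
    and bil_forms_outside: "a \<notin> V \<or> b \<notin> V \<Longrightarrow> \<phi> a b = 0"
  using assms unfolding bil_forms_def by blast+

lemma cocycle_of_in_Z2comm_W1: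
  assumes f: "f \<in> lin_forms (O1 p n)"
  shows "cocycle_of p n f \<in> Z2comm_W1 p n"
proof -
  note fadd = lin_forms_add[OF f] and fsmult = lin_forms_smult[OF f]
  have "cocycle_of p n f \<in> bil_forms (O1 p n)"
    unfolding bil_forms_def lin_forms_def cocycle_of_def
    by (intro CollectI conjI ballI allI impI)
      (auto simp: O1_mult_add_left O1_mult_add_right O1_mult_smult_left O1_mult_smult_right
        fadd fsmult)
  moreover have "cocycle_of p n f x y = cocycle_of p n f y x" for x y
    by (simp add: cocycle_of_def O1_mult_commute conj_commute)
  moreover have "cocycle_of p n f (W1_bracket p n x y) z + cocycle_of p n f (W1_bracket p n z x) y
      + cocycle_of p n f (W1_bracket p n y z) x = 0"
    if "x \<in> O1 p n" "y \<in> O1 p n" "z \<in> O1 p n" for x y z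
    using that lin_forms_zero[OF f O1_zero]
    by (simp add: cocycle_of_def fadd[symmetric] O1_mult_W1_bracket_cyclic)
  ultimately show ?thesis
    unfolding Z2comm_W1_def by blast
qed

lemma Z2comm_W1_diff:
  assumes "\<phi> \<in> Z2comm_W1 p n" "\<chi> \<in> Z2comm_W1 p n"
  shows "(\<lambda>a b. \<phi> a b - \<chi> a b) \<in> Z2comm_W1 p n"
proof -
  have "(\<lambda>a b. \<phi> a b - \<chi> a b) \<in> bil_forms (O1 p n)"
    using assms unfolding Z2comm_W1_def bil_forms_def lin_forms_def by (auto simp: algebra_simps)
  then show ?thesis
    using assms unfolding Z2comm_W1_def by (auto simp: algebra_simps)
qed

lemma
  assumes "\<phi> \<in> Z2comm_W1 p n"
  shows Z2comm_W1_bil_forms: "\<phi> \<in> bil_forms (O1 p n)"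
    and Z2comm_W1_sym: "x \<in> O1 p n \<Longrightarrow> y \<in> O1 p n \<Longrightarrow> \<phi> x y = \<phi> y x"
    and Z2comm_W1_cyclic: "x \<in> O1 p n \<Longrightarrow> y \<in> O1 p n \<Longrightarrow> z \<in> O1 p n \<Longrightarrow>
      \<phi> (W1_bracket p n x y) z + \<phi> (W1_bracket p n z x) y + \<phi> (W1_bracket p n y z) x = 0"
  using assms unfolding Z2comm_W1_def by blast+

definition dp_basis :: "nat \<Rightarrow> nat \<Rightarrow> 'k::field" where
  "dp_basis i = (\<lambda>k. if k = i then 1 else 0)"

lemma dp_basis_apply: "dp_basis i k = (if k = i then 1 else 0)"
  by (simp add: dp_basis_def)

lemma dp_basis_in_O1 [simp]: "i < p^n \<Longrightarrow> dp_basis i \<in> O1 p n"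
  by (simp add: O1_def dp_basis_def)

lemma O1_mult_dp_basis:
  "O1_mult p n (dp_basis i) b = (\<lambda>k. if k < p^n \<and> i \<le> k then of_nat (k choose i) * b (k - i) else 0)"
proof
  fix k
  have "(\<Sum>l\<le>k. of_nat (k choose l) * dp_basis i l * b (k - l))
      = (\<Sum>l\<le>k. if l = i then of_nat (k choose i) * b (k - i) else 0)"
    by (intro sum.cong) (auto simp: dp_basis_def)
  then show "O1_mult p n (dp_basis i) b k
           = (if k < p^n \<and> i \<le> k then of_nat (k choose i) * b (k - i) else 0)"
    by (simp add: O1_mult_def sum.delta)
qed

lemma O1_mult_dp_basis_0: "a \<in> O1 p n \<Longrightarrow> O1_mult p n (dp_basis 0) a = a"
  by (auto simp: O1_mult_dp_basis O1_def)

lemma cocycle_of_dp_basis_0: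
  assumes "f \<in> lin_forms (O1 p n)" "0 < p^n"
  shows "cocycle_of p n f (dp_basis 0) = f"
proof
  fix a
  show "cocycle_of p n f (dp_basis 0) a = f a"
    using assms lin_forms_outside[OF assms(1), of a]
    by (simp add: cocycle_of_def O1_mult_dp_basis_0)
qed

lemma lin_forms_O1_expansion:
  assumes f: "f \<in> lin_forms (O1 p n)" and a: "a \<in> O1 p n"
  shows "f a = (\<Sum>i<p^n. a i * f (dp_basis i))"
proof -
  note fadd = lin_forms_add[OF f] and fsmult = lin_forms_smult[OF f]
  have partial_in_O1: "(\<lambda>k. \<Sum>i\<in>S. a i * dp_basis i k) \<in> O1 p n" if "S \<subseteq> {..<p^n}" for S
    using that by (auto simp: O1_def dp_basis_def intro!: sum.neutral)
  have "finite S \<Longrightarrow> S \<subseteq> {..<p^n} \<Longrightarrow>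
      f (\<lambda>k. \<Sum>i\<in>S. a i * dp_basis i k) = (\<Sum>i\<in>S. a i * f (dp_basis i))" for S
  proof (induction S rule: finite_induct)
    case empty
    then show ?case
      using lin_forms_zero[OF f O1_zero] by simp
  next
    case (insert x S)
    then have "f (\<lambda>k. a x * dp_basis x k + (\<Sum>i\<in>S. a i * dp_basis i k))
             = a x * f (dp_basis x) + f (\<lambda>k. \<Sum>i\<in>S. a i * dp_basis i k)"
      by (simp add: fadd partial_in_O1 fsmult)
    with insert show ?case
      by simp
  qed
  moreover have "(\<lambda>k. \<Sum>i<p^n. a i * dp_basis i k) = a"
    using a by (auto simp: dp_basis_def O1_def if_distrib cong: if_cong)
  ultimately show ?thesis
    by (metis finite_lessThan order_refl)
qed

lemma bil_forms_O1_zeroI: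
  assumes \<psi>: "\<psi> \<in> bil_forms (O1 p n)"
    and basis: "\<And>i j. i < p^n \<Longrightarrow> j < p^n \<Longrightarrow> \<psi> (dp_basis i) (dp_basis j) = 0"
  shows "\<psi> a b = 0"
proof (cases "a \<in> O1 p n \<and> b \<in> O1 p n")
  case True
  have "\<psi> (dp_basis i) b = 0" if "i < p^n" for i
    using lin_forms_O1_expansion[OF bil_forms_lin_left[OF \<psi>] True[THEN conjunct2]] that basis
    by simp
  then show ?thesis
    using lin_forms_O1_expansion[OF bil_forms_lin_right[OF \<psi>] True[THEN conjunct1]] True
    by simp
qed (rule bil_forms_outside[OF \<psi>], blast)

lemma bil_forms_O1_smult_left:
  assumes \<psi>: "\<psi> \<in> bil_forms (O1 p n)"
  shows "\<psi> (\<lambda>k. c * a k) b = c * \<psi> a b"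
proof (cases "b \<in> O1 p n")
  case b: True
  note lin = bil_forms_lin_right[OF \<psi> b]
  consider "a \<in> O1 p n" | "c = 0" | "a \<notin> O1 p n" "c \<noteq> 0"
    by blast
  then show ?thesis
  proof cases
    case 1
    then show ?thesis
      by (rule lin_forms_smult[OF lin])
  next
    case 2
    then show ?thesis
      using lin_forms_zero[OF lin O1_zero] by simp
  next
    case 3
    then show ?thesis
      using lin_forms_outside[OF lin] by (simp add: O1_smult_iff)
  qed
qed (simp add: bil_forms_outside[OF \<psi>])

definition W1_struct_const :: "nat \<Rightarrow> nat \<Rightarrow> nat \<Rightarrow> 'k::field" where
  "W1_struct_const N i j =
     (if 0 < i + j \<and> i + j \<le> N then of_nat (i + j - 1 choose i) - of_nat (i + j - 1 choose j) else 0)"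

lemma O1_mult_dp_basis_O1_der:
  "j < p^n \<Longrightarrow> O1_mult p n (dp_basis i) (O1_der p n (dp_basis j))
     = (\<lambda>k. if k < p^n \<and> 0 < j \<and> k + 1 = i + j then of_nat (k choose i) else 0)"
  unfolding O1_mult_dp_basis by (rule ext) (auto simp: O1_der_def dp_basis_def)

lemma W1_bracket_dp_basis:
  assumes "i < p^n" "j < p^n"
  shows "W1_bracket p n (dp_basis i :: nat \<Rightarrow> 'k::field) (dp_basis j)
       = (\<lambda>k. W1_struct_const (p^n) i j * dp_basis (i + j - 1) k)"
proof
  fix k
  have bracket: "W1_bracket p n (dp_basis i :: nat \<Rightarrow> 'k) (dp_basis j) k
      = (if k < p^n \<and> 0 < j \<and> k + 1 = i + j then of_nat (k choose i) else 0)
      - (if k < p^n \<and> 0 < i \<and> k + 1 = i + j then of_nat (k choose j) else 0)"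
    using assms by (simp add: W1_bracket_def O1_mult_dp_basis_O1_der add.commute)
  show "W1_bracket p n (dp_basis i :: nat \<Rightarrow> 'k) (dp_basis j) k
      = W1_struct_const (p^n) i j * dp_basis (i + j - 1) k"
  proof (cases "k < p^n \<and> k + 1 = i + j")
    case True
    then have k: "i + j - 1 = k" "0 < i + j" "i + j \<le> p^n"
      by auto
    have "W1_bracket p n (dp_basis i :: nat \<Rightarrow> 'k) (dp_basis j) k = of_nat (k choose i) - of_nat (k choose j)"
      using True by (auto simp: bracket binomial_eq_0)
    then show ?thesis
      using k by (simp add: W1_struct_const_def dp_basis_apply)
  next
    case False
    then have "W1_bracket p n (dp_basis i :: nat \<Rightarrow> 'k) (dp_basis j) k = 0"
      unfolding bracket by auto
    moreover have "W1_struct_const (p^n) i j * dp_basis (i + j - 1) k = (0::'k)"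
      using False by (auto simp: W1_struct_const_def dp_basis_apply)
    ultimately show ?thesis
      by argo
  qed
qed

lemma W1_struct_const_0_left: "0 < i \<Longrightarrow> i \<le> N \<Longrightarrow> W1_struct_const N 0 i = 1"
  by (simp add: W1_struct_const_def binomial_eq_0)

lemma W1_struct_const_0_right: "0 < i \<Longrightarrow> i \<le> N \<Longrightarrow> W1_struct_const N i 0 = -1"
  by (simp add: W1_struct_const_def binomial_eq_0)

lemma W1_struct_const_1_left: "0 < j \<Longrightarrow> j < N \<Longrightarrow> W1_struct_const N 1 j = of_nat j - 1"
  by (simp add: W1_struct_const_def)

lemma W1_struct_const_1_right: "0 < j \<Longrightarrow> j < N \<Longrightarrow> W1_struct_const N j 1 = 1 - of_nat j"
  by (simp add: W1_struct_const_def)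

lemma W1_struct_const_eq_0: "N < i + j \<Longrightarrow> W1_struct_const N i j = 0"
  by (simp add: W1_struct_const_def)

lemma W1_struct_const_2:
  assumes N: "4 \<le> N" and N0: "of_nat N = (0::'k::field)" and two: "(2::'k) \<noteq> 0"
  shows "W1_struct_const N 2 (N - 2) = (2::'k)"
proof -
  have "even ((N - 1) * (N - 1 - 1))" "N - 1 - 1 = N - 2"
    by simp_all
  then have "2 * (N - 1 choose 2) = (N - 1) * (N - 2)"
    by (simp add: choose_two)
  then have "(2::'k) * of_nat (N - 1 choose 2) = of_nat (N - 1) * of_nat (N - 2)"
    by (metis of_nat_mult of_nat_numeral)
  also have "\<dots> = 2"
    using N N0 by (simp add: of_nat_diff)
  finally have "of_nat (N - 1 choose 2) = (1::'k)"
    using two by simp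
  moreover have "of_nat (N - 1 choose (N - 2)) = (-1::'k)"
    using N N0 binomial_symmetric[of "N - 2" "N - 1"] by (simp add: of_nat_diff)
  moreover have "2 + (N - 2) = N"
    using N by simp
  ultimately show ?thesis
    using N by (simp add: W1_struct_const_def)
qed

lemma Z2comm_W1_dp_basis:
  assumes \<psi>: "\<psi> \<in> Z2comm_W1 p n" and ijk: "i < p^n" "j < p^n" "k < p^n"
  shows "W1_struct_const (p^n) i j * \<psi> (dp_basis (i + j - 1)) (dp_basis k)
       + W1_struct_const (p^n) k i * \<psi> (dp_basis (k + i - 1)) (dp_basis j)
       + W1_struct_const (p^n) j k * \<psi> (dp_basis (j + k - 1)) (dp_basis i) = 0"
proof -
  have "\<psi> (W1_bracket p n (dp_basis i) (dp_basis j)) (dp_basis k)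
      + \<psi> (W1_bracket p n (dp_basis k) (dp_basis i)) (dp_basis j)
      + \<psi> (W1_bracket p n (dp_basis j) (dp_basis k)) (dp_basis i) = 0"
    using ijk by (intro Z2comm_W1_cyclic[OF \<psi>]) simp_all
  then show ?thesis
    using ijk by (simp add: W1_bracket_dp_basis bil_forms_O1_smult_left[OF Z2comm_W1_bil_forms[OF \<psi>]])
qed

lemma eq_on_antidiagonals:
  fixes h :: "nat \<Rightarrow> nat \<Rightarrow> 'a"
  assumes shift: "\<And>i j. 0 < i \<Longrightarrow> 0 < j \<Longrightarrow> i < N \<Longrightarrow> j < N \<Longrightarrow> h (i - 1) j = h i (j - 1)"
    and "i < N" "j < N" "i' < N" "j' < N" "i + j = i' + j'"
  shows "h i j = h i' j'"
proof -
  have step: "h i j = h (i + d) (j - d)" if "i + d < N" "j < N" "d \<le> j" for i j d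
    using that
  proof (induction d arbitrary: i j)
    case (Suc d)
    have "h i j = h (Suc i) (j - 1)"
      using shift[of "Suc i" j] Suc.prems by simp
    also have "\<dots> = h (Suc i + d) (j - 1 - d)"
      using Suc.IH[of "Suc i" "j - 1"] Suc.prems by simp
    finally show ?case
      by simp
  qed simp
  show ?thesis
  proof (cases "i \<le> i'")
    case True
    then have "j - (i' - i) = j'"
      using assms by arith
    then show ?thesis
      using step[of i "i' - i" j] True assms by simp
  next
    case False
    then have "j' - (i - i') = j"
      using assms by arith
    then show ?thesis
      using step[of i' "i - i'" j'] False assms by simp
  qed
qed

locale W1_cocycle_coeffs =
  fixes N :: nat and h :: "nat \<Rightarrow> nat \<Rightarrow> 'k::field"
  assumes N_ge_4: "4 \<le> N" and of_nat_N: "of_nat N = (0::'k)"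
    and two_neq_zero: "(2::'k) \<noteq> 0" and three_neq_zero: "(3::'k) \<noteq> 0"
    and sym: "i < N \<Longrightarrow> j < N \<Longrightarrow> h i j = h j i"
    and unit: "j < N \<Longrightarrow> h 0 j = 0"
    and cocycle: "i < N \<Longrightarrow> j < N \<Longrightarrow> k < N \<Longrightarrow>
        W1_struct_const N i j * h (i + j - 1) k + W1_struct_const N k i * h (k + i - 1) j
      + W1_struct_const N j k * h (j + k - 1) i = 0"
begin

lemma shift:
  assumes "0 < i" "0 < j" "i < N" "j < N"
  shows "h (i - 1) j = h i (j - 1)"
proof -
  have vanishing_term: "W1_struct_const N i j * h (i + j - 1) 0 = 0"
  proof (cases "i + j \<le> N")
    case True
    then show ?thesis
      using sym[of "i + j - 1" 0] unit[of "i + j - 1"] assms by simp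
  qed (simp add: W1_struct_const_eq_0)
  have "W1_struct_const N i j * h (i + j - 1) 0 + h (i - 1) j - h i (j - 1) = 0"
    using cocycle[of i j 0] sym[of "j - 1" i] assms
    by (simp add: W1_struct_const_0_left W1_struct_const_0_right)
  then show ?thesis
    unfolding vanishing_term by simp
qed

lemma eq_antidiagonal:
  "i < N \<Longrightarrow> j < N \<Longrightarrow> i' < N \<Longrightarrow> j' < N \<Longrightarrow> i + j = i' + j' \<Longrightarrow> h i j = h i' j'"
  using shift by (rule eq_on_antidiagonals)

lemma vanishes_below: "i + j < N \<Longrightarrow> h i j = 0"
  using eq_antidiagonal[of i j 0 "i + j"] unit[of "i + j"] by simp

lemma high_antidiagonal:
  assumes "j < N" "k < N" "N < j + k"
  shows "(of_nat j - of_nat k) * h j k = 0"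
proof -
  have "(of_nat j - 1) * h j k + (1 - of_nat k) * h j k = 0"
    using W1_struct_const_1_left[of j N, where 'a='k] W1_struct_const_1_right[of k N, where 'a='k]
      cocycle[of 1 j k] sym[of k j] assms
    by (simp add: W1_struct_const_eq_0)
  then show ?thesis
    by (simp add: algebra_simps)
qed

lemma of_nat_N_minus: "m \<le> N \<Longrightarrow> of_nat (N - m) = - (of_nat m :: 'k)"
  using of_nat_N by (simp add: of_nat_diff)

lemma antidiagonal_N_vanishes: "h (N - 1) 1 = 0"
proof -
  have "1 + 2 - 1 = (2::nat)" "N - 2 + 1 - 1 = N - 2" "2 + (N - 2) - 1 = N - 1"
    using N_ge_4 by simp_all
  moreover have "h 2 (N - 2) = h (N - 1) 1" "h (N - 2) 2 = h (N - 1) 1"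
    using N_ge_4 by (simp_all add: eq_antidiagonal)
  moreover have "W1_struct_const N 1 2 = (1::'k)"
    using N_ge_4 W1_struct_const_1_left[of 2 N, where 'a='k] by simp
  moreover have "W1_struct_const N (N - 2) 1 = (3::'k)"
    using N_ge_4 W1_struct_const_1_right[of "N - 2" N, where 'a='k] of_nat_N_minus[of 2] by simp
  moreover have "W1_struct_const N 2 (N - 2) = (2::'k)"
    using N_ge_4 of_nat_N two_neq_zero by (rule W1_struct_const_2)
  ultimately have "1 * h (N - 1) 1 + 3 * h (N - 1) 1 + 2 * h (N - 1) 1 = 0"
    using cocycle[of 1 2 "N - 2"] N_ge_4 by (simp only:)
  then have "6 * h (N - 1) 1 = 0"
    by (simp add: algebra_simps)
  moreover have "(6::'k) \<noteq> 0"
    using no_zero_divisors[OF two_neq_zero three_neq_zero] by simp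
  ultimately show ?thesis
    by simp
qed

lemma high_antidiagonal_vanishes:
  assumes "1 < k" "k < N - 1"
  shows "h (N - 1) k = 0"
proof -
  have "h (N - 2) (k + 1) = h (N - 1) k"
    using assms by (simp add: eq_antidiagonal)
  then have "(of_nat (N - 1) - of_nat k) * h (N - 1) k = 0"
    and "(of_nat (N - 2) - of_nat (k + 1)) * h (N - 1) k = 0"
    using high_antidiagonal[of "N - 1" k] high_antidiagonal[of "N - 2" "k + 1"] assms by auto
  then have "2 * h (N - 1) k = 0"
    using N_ge_4 of_nat_N_minus[of 1] of_nat_N_minus[of 2] by (simp add: algebra_simps)
  then show ?thesis
    using two_neq_zero by simp
qed

lemma corner_vanishes: "h (N - 1) (N - 1) = 0"
proof -
  have idx: "2 + (N - 2) - 1 = N - 1"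
    using N_ge_4 by simp
  have "2 * h (N - 1) (N - 1) = 0"
    using cocycle[of 2 "N - 2" "N - 1", unfolded idx] N_ge_4
    by (simp add: W1_struct_const_2 of_nat_N two_neq_zero W1_struct_const_eq_0)
  then show ?thesis
    using two_neq_zero by simp
qed

lemma last_row_vanishes:
  assumes "0 < k" "k < N"
  shows "h (N - 1) k = 0"
proof -
  consider "k = 1" | "1 < k" "k < N - 1" | "k = N - 1"
    using assms by linarith
  then show ?thesis
    using antidiagonal_N_vanishes high_antidiagonal_vanishes corner_vanishes by cases auto
qed

lemma vanishes: "i < N \<Longrightarrow> j < N \<Longrightarrow> h i j = 0"
proof (cases "i + j < N")
  case False
  assume "i < N" "j < N"
  then have "h i j = h (N - 1) (i + j - (N - 1))"
    using False by (intro eq_antidiagonal) auto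
  also have "\<dots> = 0"
    using False \<open>i < N\<close> \<open>j < N\<close> by (intro last_row_vanishes) auto
  finally show ?thesis .
qed (rule vanishes_below)

end

lemma Z2comm_W1_zeroI:
  fixes \<psi> :: "(nat \<Rightarrow> 'k::field) \<Rightarrow> (nat \<Rightarrow> 'k) \<Rightarrow> 'k"
  assumes "4 \<le> p^n" "of_nat (p^n) = (0::'k)" "(2::'k) \<noteq> 0" "(3::'k) \<noteq> 0"
    and \<psi>: "\<psi> \<in> Z2comm_W1 p n" and unit: "\<And>b. \<psi> (dp_basis 0) b = 0"
  shows "\<psi> a b = 0"
proof -
  have "W1_cocycle_coeffs (p^n) (\<lambda>i j. \<psi> (dp_basis i) (dp_basis j))"
  proof
    show "4 \<le> p^n" "of_nat (p^n) = (0::'k)" "(2::'k) \<noteq> 0" "(3::'k) \<noteq> 0"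
      by (fact assms)+
    show "\<psi> (dp_basis i) (dp_basis j) = \<psi> (dp_basis j) (dp_basis i)" if "i < p^n" "j < p^n" for i j
      using that by (intro Z2comm_W1_sym[OF \<psi>]) simp_all
    show "\<psi> (dp_basis 0) (dp_basis j) = 0" for j
      by (rule unit)
    show "W1_struct_const (p^n) i j * \<psi> (dp_basis (i + j - 1)) (dp_basis k)
        + W1_struct_const (p^n) k i * \<psi> (dp_basis (k + i - 1)) (dp_basis j)
        + W1_struct_const (p^n) j k * \<psi> (dp_basis (j + k - 1)) (dp_basis i) = 0"
      if "i < p^n" "j < p^n" "k < p^n" for i j k
      using \<psi> that by (rule Z2comm_W1_dp_basis)
  qed
  then have "\<psi> (dp_basis i) (dp_basis j) = 0" if "i < p^n" "j < p^n" for i j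
    using that by (rule W1_cocycle_coeffs.vanishes)
  then show ?thesis
    by (rule bil_forms_O1_zeroI[OF Z2comm_W1_bil_forms[OF \<psi>]])
qed

lemma Z2comm_W1_unit_lin_form:
  assumes "0 < p^n" "\<phi> \<in> Z2comm_W1 p n"
  shows "\<phi> (dp_basis 0) \<in> lin_forms (O1 p n)"
proof -
  have "dp_basis 0 \<in> O1 p n"
    using assms(1) by simp
  then show ?thesis
    by (rule bil_forms_lin_left[OF Z2comm_W1_bil_forms[OF assms(2)]])
qed

lemma Z2comm_W1_eq_cocycle_of:
  fixes \<phi> :: "(nat \<Rightarrow> 'k::field) \<Rightarrow> (nat \<Rightarrow> 'k) \<Rightarrow> 'k"
  assumes "4 \<le> p^n" "of_nat (p^n) = (0::'k)" "(2::'k) \<noteq> 0" "(3::'k) \<noteq> 0"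
    and \<phi>: "\<phi> \<in> Z2comm_W1 p n"
  shows "\<phi> = cocycle_of p n (\<phi> (dp_basis 0))"
proof -
  have "0 < p^n"
    using assms(1) by linarith
  then have f: "\<phi> (dp_basis 0) \<in> lin_forms (O1 p n)"
    using \<phi> by (rule Z2comm_W1_unit_lin_form)
  define \<psi> where "\<psi> = (\<lambda>a b. \<phi> a b - cocycle_of p n (\<phi> (dp_basis 0)) a b)"
  have \<psi>: "\<psi> \<in> Z2comm_W1 p n"
    unfolding \<psi>_def by (rule Z2comm_W1_diff[OF \<phi> cocycle_of_in_Z2comm_W1[OF f]])
  have \<psi>_unit: "\<psi> (dp_basis 0) b = 0" for b
    using cocycle_of_dp_basis_0[OF f \<open>0 < p^n\<close>] by (simp add: \<psi>_def)
  have "\<psi> a b = 0" for a b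
    using assms(1-4) \<psi> \<psi>_unit by (rule Z2comm_W1_zeroI)
  then show ?thesis
    by (auto simp: \<psi>_def)
qed

lemma inj_on_cocycle_of:
  assumes "0 < p^n"
  shows "inj_on (cocycle_of p n) (lin_forms (O1 p n :: (nat \<Rightarrow> 'k::field) set))"
proof (rule inj_onI)
  fix f g :: "(nat \<Rightarrow> 'k) \<Rightarrow> 'k"
  assume f: "f \<in> lin_forms (O1 p n)" and g: "g \<in> lin_forms (O1 p n)"
    and eq: "cocycle_of p n f = cocycle_of p n g"
  have "f = cocycle_of p n f (dp_basis 0)"
    by (rule cocycle_of_dp_basis_0[OF f assms, symmetric])
  also have "\<dots> = g"
    unfolding eq by (rule cocycle_of_dp_basis_0[OF g assms])
  finally show "f = g" .
qed

lemma Z2comm_W1_surj: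
  assumes "4 \<le> p^n" "of_nat (p^n) = (0::'k::field)" "(2::'k) \<noteq> 0" "(3::'k) \<noteq> 0"
  shows "\<forall>\<phi> \<in> Z2comm_W1 p n. \<exists>f \<in> lin_forms (O1 p n :: (nat \<Rightarrow> 'k) set). \<phi> = cocycle_of p n f"
proof
  fix \<phi> :: "(nat \<Rightarrow> 'k) \<Rightarrow> (nat \<Rightarrow> 'k) \<Rightarrow> 'k"
  assume \<phi>: "\<phi> \<in> Z2comm_W1 p n"
  have "0 < p^n"
    using assms(1) by linarith
  then show "\<exists>f \<in> lin_forms (O1 p n). \<phi> = cocycle_of p n f"
    using Z2comm_W1_eq_cocycle_of[OF assms \<phi>] Z2comm_W1_unit_lin_form[OF _ \<phi>] by blast
qed

lemma cocycle_of_linear: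
  "cocycle_of p n (\<lambda>a. c * f a + g a) = (\<lambda>a b. c * cocycle_of p n f a b + cocycle_of p n g a b)"
  by (intro ext) (simp add: cocycle_of_def)

lemma of_nat_neq_0_below_CHAR: "0 < m \<Longrightarrow> m < CHAR('a) \<Longrightarrow> of_nat m \<noteq> (0::'a::semiring_1)"
  by (auto simp: of_nat_eq_0_iff_char_dvd dest: dvd_imp_le)

theorem proposition2p6:
  fixes n :: nat
  assumes "CHAR('k::field) > 3" and "n \<ge> 1"
  defines "p \<equiv> CHAR('k)"
  shows "(\<forall>f \<in> lin_forms (O1 p n :: (nat \<Rightarrow> 'k) set). cocycle_of p n f \<in> Z2comm_W1 p n)
       \<and> (\<forall>\<phi> \<in> Z2comm_W1 p n. \<exists>f \<in> lin_forms (O1 p n :: (nat \<Rightarrow> 'k) set). \<phi> = cocycle_of p n f)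
       \<and> bij_betw (cocycle_of p n) (lin_forms (O1 p n :: (nat \<Rightarrow> 'k) set)) (Z2comm_W1 p n)
       \<and> (\<forall>f \<in> lin_forms (O1 p n :: (nat \<Rightarrow> 'k) set). \<forall>g \<in> lin_forms (O1 p n). \<forall>c::'k.
            cocycle_of p n (\<lambda>a. c * f a + g a) = (\<lambda>a b. c * cocycle_of p n f a b + cocycle_of p n g a b))"
proof -
  have "3 < p"
    using assms(1) by (simp add: p_def)
  then have N: "4 \<le> p^n"
    using assms(2) self_le_power[of p n] by linarith
  have N0: "of_nat (p^n) = (0::'k)"
    using assms(2) by (simp add: p_def of_nat_power)
  have two: "(2::'k) \<noteq> 0" and three: "(3::'k) \<noteq> 0"
    using of_nat_neq_0_below_CHAR[of 2, where 'a='k] of_nat_neq_0_below_CHAR[of 3, where 'a='k] \<open>3 < p\<close>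
    by (simp_all add: p_def)
  have onto: "\<forall>\<phi> \<in> Z2comm_W1 p n. \<exists>f \<in> lin_forms (O1 p n :: (nat \<Rightarrow> 'k) set). \<phi> = cocycle_of p n f"
    using N N0 two three by (rule Z2comm_W1_surj)
  moreover have "cocycle_of p n ` lin_forms (O1 p n :: (nat \<Rightarrow> 'k) set) = Z2comm_W1 p n"
    using onto cocycle_of_in_Z2comm_W1 by blast
  moreover have "inj_on (cocycle_of p n) (lin_forms (O1 p n :: (nat \<Rightarrow> 'k) set))"
    using N by (intro inj_on_cocycle_of) linarith
  ultimately show ?thesis
    by (simp add: cocycle_of_in_Z2comm_W1 bij_betw_def cocycle_of_linear)
qed

end
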